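(* Let $k\geq 1$. Every graph $G$ with $n$ vertices and no $(k+1)$-clique satisfies $c(G)\leq\left(\frac{n}{k}+1\right)^k$.
   Context: All graphs are finite, simple and undirected. A clique of a graph $G$ is a (possibly empty) set of pairwise adjacent vertices, a $k$-clique is a clique of cardinality $k$, and $c(G)$ denotes the number of cliques of $G$ (including the empty clique). *)

theory Defs
  imports Main Complex_Main
begin

definition simple_graph :: "'a set \<Rightarrow> ('a \<Rightarrow> 'a \<Rightarrow> bool) \<Rightarrow> bool" where
  "simple_graph V E \<longleftrightarrow> finite V \<and> (\<forall>x y. E x y \<longrightarrow> E y x) \<and> (\<forall>x. \<not> E x x)
     \<and> (\<forall>x y. E x y \<longrightarrow> x \<in> V \<and> y \<in> V)"

definition is_clique :: "'a set \<Rightarrow> ('a \<Rightarrow> 'a \<Rightarrow> bool) \<Rightarrow> 'a set \<Rightarrow> bool" where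
  "is_clique V E C \<longleftrightarrow> C \<subseteq> V \<and> (\<forall>x\<in>C. \<forall>y\<in>C. x \<noteq> y \<longrightarrow> E x y)"

text \<open>Number of cliques c(G), including the empty clique.\<close>
definition num_cliques :: "'a set \<Rightarrow> ('a \<Rightarrow> 'a \<Rightarrow> bool) \<Rightarrow> nat" where
  "num_cliques V E = card {C. is_clique V E C}"

end

theory Submission
  imports Defs
begin

(* Induction on k. Let v be a vertex of maximum degree d and A its neighbourhood. A clique
   either lies in A, or contains a vertex b outside A and the rest of it lies in the
   neighbourhood of b. Neighbourhoods are K_{k}-free graphs on at most d vertices, so
   c(G) <= (n - d + 1) (d/(k-1) + 1)^(k-1), and AM-GM bounds the right-hand side by
   (n/k + 1)^k. *)

definition neighbours :: "('a \<Rightarrow> 'a \<Rightarrow> bool) \<Rightarrow> 'a \<Rightarrow> 'a set" where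
  "neighbours E x = {y. E x y}"

definition induced :: "('a \<Rightarrow> 'a \<Rightarrow> bool) \<Rightarrow> 'a set \<Rightarrow> 'a \<Rightarrow> 'a \<Rightarrow> bool" where
  "induced E S x y \<longleftrightarrow> E x y \<and> x \<in> S \<and> y \<in> S"

lemma mult_power_le_mean_power:
  fixes a y :: real and m :: nat
  assumes "a \<ge> 0" "y > 0"
  shows "a * y ^ m \<le> ((a + m * y) / (m + 1)) ^ (m + 1)"
proof -
  define s where "s = (a + m * y) / (m + 1)"
  have "s \<ge> 0" using assms unfolding s_def by simp
  then have "-1 \<le> (s - y) / y" using assms by (simp add: field_simps)
  then have "1 + real (m + 1) * ((s - y) / y) \<le> (1 + (s - y) / y) ^ (m + 1)"
    by (rule Bernoulli_inequality)
  moreover have "real (m + 1) * (s - y) = a - y"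
    unfolding s_def by (simp add: field_simps)
  then have "1 + real (m + 1) * ((s - y) / y) = a / y"
    using assms by (simp add: field_simps)
  moreover have "1 + (s - y) / y = s / y" using assms by (simp add: field_simps)
  ultimately have "a / y * y ^ (m + 1) \<le> (s / y) ^ (m + 1) * y ^ (m + 1)"
    using assms by (intro mult_right_mono) auto
  moreover have "a / y * y ^ (m + 1) = a * y ^ m" using assms by (simp add: field_simps)
  moreover have "(s / y) ^ (m + 1) * y ^ (m + 1) = s ^ (m + 1)" using assms
    by (simp add: power_divide)
  ultimately show ?thesis unfolding s_def by simp
qed

lemma clique_bound_step:
  fixes n d m :: nat
  assumes "d \<le> n"
  shows "(real (n - d) + 1) * (real d / real m + 1) ^ m \<le> (real n / real (Suc m) + 1) ^ Suc m"
proof -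
  have "(real (n - d) + 1) * (real d / real m + 1) ^ m
      \<le> ((real (n - d) + 1 + m * (real d / real m + 1)) / (m + 1)) ^ (m + 1)"
    by (rule mult_power_le_mean_power) (auto intro: add_nonneg_pos)
  also have "\<dots> \<le> ((real n + 1 + m) / (m + 1)) ^ (m + 1)"
  proof (rule power_mono)
    have "real (n - d) + 1 + m * (real d / real m + 1) \<le> real n + 1 + m"
      using assms by (cases "m = 0") (auto simp: field_simps of_nat_diff)
    then show "(real (n - d) + 1 + m * (real d / real m + 1)) / (m + 1)
        \<le> (real n + 1 + m) / (m + 1)"
      by (simp add: divide_right_mono)
  qed simp
  also have "(real n + 1 + m) / (m + 1) = real n / real (Suc m) + 1"
    by (simp add: field_simps)
  finally show ?thesis by simp
qed

lemma finite_cliques: "finite V \<Longrightarrow> finite {C. is_clique V E C}"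
  by (rule finite_subset[of _ "Pow V"]) (auto simp: is_clique_def)

lemma num_cliques_empty: "num_cliques {} E = 1"
proof -
  have "{C. is_clique {} E C} = {{}}" by (auto simp: is_clique_def)
  then show ?thesis by (simp add: num_cliques_def)
qed

lemma is_clique_induced_iff:
  "is_clique S (induced E S) C \<longleftrightarrow> C \<subseteq> S \<and> (\<forall>x\<in>C. \<forall>y\<in>C. x \<noteq> y \<longrightarrow> E x y)"
  by (auto simp: is_clique_def induced_def)

lemma simple_graph_induced:
  assumes "simple_graph V E" "S \<subseteq> V"
  shows "simple_graph S (induced E S)"
  using assms unfolding simple_graph_def induced_def by (auto intro: finite_subset)

lemma neighbours_subset:
  "simple_graph V E \<Longrightarrow> neighbours E x \<subseteq> V"
  by (auto simp: simple_graph_def neighbours_def)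

lemma clique_free_neighbours:
  assumes G: "simple_graph V E"
    and free: "\<not> (\<exists>C. is_clique V E C \<and> card C = k + 2)"
  shows "\<not> (\<exists>C. is_clique (neighbours E x) (induced E (neighbours E x)) C \<and> card C = k + 1)"
proof
  assume "\<exists>C. is_clique (neighbours E x) (induced E (neighbours E x)) C \<and> card C = k + 1"
  then obtain C where C: "C \<subseteq> neighbours E x" "\<forall>y\<in>C. \<forall>z\<in>C. y \<noteq> z \<longrightarrow> E y z"
    and card: "card C = k + 1"
    by (auto simp: is_clique_induced_iff)
  then have "finite C" "C \<noteq> {}" using card_gt_0_iff[of C] by simp_all
  with C obtain y where "E x y" by (auto simp: neighbours_def)
  with G have "x \<in> V" by (simp add: simple_graph_def)
  have "x \<notin> C" using C(1) G by (auto simp: neighbours_def simple_graph_def)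
  with \<open>finite C\<close> card have "card (insert x C) = k + 2" by simp
  moreover have "is_clique V E (insert x C)"
    using C \<open>x \<in> V\<close> neighbours_subset[OF G, of x] G
    unfolding is_clique_def neighbours_def simple_graph_def by blast
  ultimately show False using free by blast
qed

lemma num_cliques_le_subset_plus_neighbours:
  assumes G: "simple_graph V E" and "A \<subseteq> V"
  shows "num_cliques V E \<le> num_cliques A (induced E A)
    + (\<Sum>b\<in>V - A. num_cliques (neighbours E b) (induced E (neighbours E b)))"
proof -
  let ?cl = "\<lambda>S. {C. is_clique S (induced E S) C}"
  have fin: "finite V" using G by (simp add: simple_graph_def)
  have fin_A: "finite A" using \<open>A \<subseteq> V\<close> fin by (rule finite_subset)
  have fin_nb: "finite (neighbours E b)" for b
    using neighbours_subset[OF G] fin by (rule finite_subset)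
  have cover: "{C. is_clique V E C} \<subseteq> ?cl A \<union> (\<Union>b\<in>V - A. insert b ` ?cl (neighbours E b))"
  proof
    fix C assume "C \<in> {C. is_clique V E C}"
    then have C: "C \<subseteq> V" "\<forall>x\<in>C. \<forall>y\<in>C. x \<noteq> y \<longrightarrow> E x y" by (auto simp: is_clique_def)
    show "C \<in> ?cl A \<union> (\<Union>b\<in>V - A. insert b ` ?cl (neighbours E b))"
    proof (cases "C \<subseteq> A")
      case True
      with C show ?thesis by (simp add: is_clique_induced_iff)
    next
      case False
      then obtain b where b: "b \<in> C" "b \<notin> A" by blast
      with C have "C - {b} \<in> ?cl (neighbours E b)"
        by (auto simp: is_clique_induced_iff neighbours_def)
      moreover have "C = insert b (C - {b})" using b by auto
      ultimately show ?thesis using b C by blast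
    qed
  qed
  have "num_cliques V E \<le> card (?cl A \<union> (\<Union>b\<in>V - A. insert b ` ?cl (neighbours E b)))"
    unfolding num_cliques_def
    using fin_A fin fin_nb by (intro card_mono[OF _ cover]) (simp add: finite_cliques)
  also have "\<dots> \<le> card (?cl A) + card (\<Union>b\<in>V - A. insert b ` ?cl (neighbours E b))"
    by (rule card_Un_le)
  also have "\<dots> \<le> card (?cl A) + (\<Sum>b\<in>V - A. card (insert b ` ?cl (neighbours E b)))"
    using fin by (intro add_left_mono card_UN_le) simp
  also have "\<dots> \<le> card (?cl A) + (\<Sum>b\<in>V - A. card (?cl (neighbours E b)))"
    by (intro add_left_mono sum_mono card_image_le finite_cliques fin_nb)
  finally show ?thesis by (simp add: num_cliques_def)
qed

lemma num_cliques_le_clique_free: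
  assumes "simple_graph V E"
    and "\<not> (\<exists>C. is_clique V E C \<and> card C = k + 1)"
  shows "real (num_cliques V E) \<le> (real (card V) / real k + 1) ^ k"
  using assms
proof (induction k arbitrary: V E)
  case 0
  then have "\<not> is_clique V E {x}" for x by auto
  then have "V = {}" by (auto simp: is_clique_def)
  then show ?case by (simp add: num_cliques_empty)
next
  case (Suc m)
  show ?case
  proof (cases "V = {}")
    case True
    then show ?thesis by (simp add: num_cliques_empty)
  next
    case False
    let ?N = "neighbours E"
    let ?c = "\<lambda>S. real (num_cliques S (induced E S))"
    have G: "simple_graph V E" and fin: "finite V"
      using Suc.prems(1) by (simp_all add: simple_graph_def)
    have nb_sub: "?N x \<subseteq> V" for x using G by (rule neighbours_subset)
    obtain v where "v \<in> V" and v_max: "(MAX x\<in>V. card (?N x)) = card (?N v)"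
      using obtains_MAX[OF fin False] .
    have max_degree: "card (?N x) \<le> card (?N v)" if "x \<in> V" for x
      using that fin by (simp flip: v_max)
    define d where "d = card (?N v)"
    define Y where "Y = (real d / real m + 1) ^ m"
    have nbhd: "?c (?N x) \<le> Y" if "x \<in> V" for x
    proof -
      have "?c (?N x) \<le> (real (card (?N x)) / real m + 1) ^ m"
        using Suc.prems nb_sub
        by (intro Suc.IH simple_graph_induced clique_free_neighbours[of V]) auto
      also have "\<dots> \<le> Y"
        unfolding Y_def d_def using max_degree[OF that]
        by (intro power_mono add_right_mono divide_right_mono) auto
      finally show ?thesis .
    qed
    have card_diff: "card (V - ?N v) = card V - d"
      unfolding d_def using finite_subset[OF nb_sub fin] nb_sub by (rule card_Diff_subset)
    have "real (num_cliques V E) \<le> ?c (?N v) + (\<Sum>b\<in>V - ?N v. ?c (?N b))"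
      using num_cliques_le_subset_plus_neighbours[OF G nb_sub]
      by (simp flip: of_nat_sum of_nat_add)
    also have "\<dots> \<le> Y + (\<Sum>b\<in>V - ?N v. Y)"
      using nbhd \<open>v \<in> V\<close> by (intro add_mono sum_mono) auto
    also have "\<dots> = (real (card V - d) + 1) * Y"
      using card_diff by (simp add: algebra_simps)
    also have "\<dots> \<le> (real (card V) / real (Suc m) + 1) ^ Suc m"
      unfolding Y_def d_def
      by (intro clique_bound_step card_mono fin nb_sub)
    finally show ?thesis .
  qed
qed

theorem proposition9:
  fixes V :: "'a set" and E :: "'a \<Rightarrow> 'a \<Rightarrow> bool" and k :: nat
  assumes "k \<ge> 1"
    and "simple_graph V E"
    and "\<not> (\<exists>C. is_clique V E C \<and> card C = k + 1)"
  shows "real (num_cliques V E) \<le> (real (card V) / real k + 1) ^ k"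
  using num_cliques_le_clique_free assms(2,3) .

end
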